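(* Let $W\in\mathbb{R}^{n\times n}$ be a symmetric positive definite matrix, $T\in\mathbb{R}^{n\times n}$ a symmetric positive semi-definite matrix, and suppose $A=W+iT\in\mathbb{C}^{n\times n}$ (with $i=\sqrt{-1}$) is non-singular. Let $b\in\mathbb{C}^n$, $\alpha>0$ and $0\le\omega<2$. Consider the GADI iteration: starting from an initial vector $x^{(0)}\in\mathbb{C}^n$, for $k=0,1,2,\dots$, $$(\alpha I+W)x^{(k+\frac12)} = (\alpha I - iT)x^{(k)} + b,$$ $$(\alpha I + iT)x^{(k+1)} = \big(iT - (1-\omega)\alpha I\big)x^{(k)} + (2-\omega)\alpha\, x^{(k+\frac12)}.$$ Then the sequence $\{x^{(k)}\}$ converges to the unique exact solution $x\in\mathbb{C}^n$ of $Ax=b$. *)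

theory Defs
  imports "HOL-Analysis.Analysis"
begin

definition sym_mat :: "real^'n^'n \<Rightarrow> bool" where
  "sym_mat M \<longleftrightarrow> transpose M = M"

definition pos_def_mat :: "real^'n^'n \<Rightarrow> bool" where
  "pos_def_mat M \<longleftrightarrow> sym_mat M \<and> (\<forall>x::real^'n. x \<noteq> 0 \<longrightarrow> x \<bullet> (M *v x) > 0)"

definition pos_semidef_mat :: "real^'n^'n \<Rightarrow> bool" where
  "pos_semidef_mat M \<longleftrightarrow> sym_mat M \<and> (\<forall>x::real^'n. x \<bullet> (M *v x) \<ge> 0)"

definition cmat :: "real^'n^'n \<Rightarrow> complex^'n^'n" where
  "cmat M = (\<chi> i j. complex_of_real (M $ i $ j))"

end

theory Submission
  imports Defs
begin

(*
  Write e_k = x_k - s and f_k = y_k - s for the errors of the two half steps and put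
  g_k = (alpha I + iT) e_k. The half step gives (alpha I + W) f_k = (alpha I - iT) e_k, and the
  full step becomes g_(k+1) = (omega/2) g_k + (1 - omega/2) (alpha I - W) f_k.
  For positive definite W the Cayley transform (alpha I - W)(alpha I + W)^-1 is a strict
  contraction, with norm rho < 1 say, while for real symmetric T the map
  (alpha I - iT)(alpha I + iT)^-1 is an isometry. Hence
  |g_(k+1)| <= (omega/2 + (1 - omega/2) rho) |g_k|, so g_k -> 0, and |e_k| <= |g_k| / alpha.
*)

definition vec_Re :: "complex^'n \<Rightarrow> real^'n" where
  "vec_Re v = (\<chi> i. Re (v $ i))"

definition vec_Im :: "complex^'n \<Rightarrow> real^'n" where
  "vec_Im v = (\<chi> i. Im (v $ i))"

lemma vec_Re_add [simp]: "vec_Re (v + w) = vec_Re v + vec_Re w"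
  and vec_Im_add [simp]: "vec_Im (v + w) = vec_Im v + vec_Im w"
  and vec_Re_diff [simp]: "vec_Re (v - w) = vec_Re v - vec_Re w"
  and vec_Im_diff [simp]: "vec_Im (v - w) = vec_Im v - vec_Im w"
  and vec_Re_scaleR [simp]: "vec_Re (r *\<^sub>R v) = r *\<^sub>R vec_Re v"
  and vec_Im_scaleR [simp]: "vec_Im (r *\<^sub>R v) = r *\<^sub>R vec_Im v"
  and vec_Re_mult_i [simp]: "vec_Re (\<i> *s v) = - vec_Im v"
  and vec_Im_mult_i [simp]: "vec_Im (\<i> *s v) = vec_Re v"
  by (simp_all add: vec_Re_def vec_Im_def vec_eq_iff)

lemma vec_Re_cmat_mult [simp]: "vec_Re (cmat M *v v) = M *v vec_Re v"
  and vec_Im_cmat_mult [simp]: "vec_Im (cmat M *v v) = M *v vec_Im v"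
  by (simp_all add: vec_Re_def vec_Im_def vec_eq_iff matrix_vector_mult_def cmat_def Re_sum Im_sum)

lemma norm_squared_vec_Re_Im: "norm v ^ 2 = norm (vec_Re v) ^ 2 + norm (vec_Im v) ^ 2"
  by (simp add: power2_norm_eq_inner inner_vec_def inner_complex_def vec_Re_def vec_Im_def
      sum.distrib[symmetric])

lemma invertible_matrix_vector_eq_unique:
  fixes A :: "'a::field^'n^'n"
  assumes "invertible A"
  shows "\<exists>s. A *v s = b \<and> (\<forall>s'. A *v s' = b \<longrightarrow> s' = s)"
  using assms unfolding invertible_eq_bij bij_iff by blast

lemma mat_matrix_vector_mult: "mat c *v v = c *s v"
  by (simp add: vec_eq_iff matrix_vector_mult_def mat_def if_distrib[of "\<lambda>a. a * _"] cong: if_cong)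

lemma mat_matrix_mult_vector_mult: "(mat c ** M) *v v = c *s (M *v v)"
  by (simp add: matrix_vector_mul_assoc[symmetric] mat_matrix_vector_mult)

lemma of_real_vector_scalar_mult: "complex_of_real r *s (v :: complex^'n) = r *\<^sub>R v"
  by (simp add: vec_eq_iff) (simp add: scaleR_conv_of_real)

lemma sym_mat_inner_commute: "sym_mat M \<Longrightarrow> x \<bullet> (M *v y) = (M *v x) \<bullet> y"
  unfolding sym_mat_def by (metis dot_lmul_matrix transpose_matrix_vector)

lemma norm_squared_shift_i_sym_mat:
  assumes "sym_mat T"
  shows "norm (\<alpha> *\<^sub>R v - (mat \<i> ** cmat T) *v v) ^ 2 = (\<alpha> * norm v) ^ 2 + norm (cmat T *v v) ^ 2"
      (is ?minus)
    and "norm (\<alpha> *\<^sub>R v + (mat \<i> ** cmat T) *v v) ^ 2 = (\<alpha> * norm v) ^ 2 + norm (cmat T *v v) ^ 2"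
      (is ?plus)
proof -
  \<comment> \<open>the cross terms \<open>Re v \<bullet> T Im v\<close> and \<open>Im v \<bullet> T Re v\<close> cancel by symmetry\<close>
  have "vec_Re v \<bullet> (T *v vec_Im v) = vec_Im v \<bullet> (T *v vec_Re v)"
    using sym_mat_inner_commute[OF assms] by (simp add: inner_commute)
  then show ?minus and ?plus
    unfolding power_mult_distrib norm_squared_vec_Re_Im[of "_ - _"] norm_squared_vec_Re_Im[of "_ + _"]
      norm_squared_vec_Re_Im[of v] norm_squared_vec_Re_Im[of "cmat T *v v"]
    by (simp_all add: mat_matrix_mult_vector_mult)
      (simp_all only: power2_norm_eq_inner,
        simp_all add: inner_simps algebra_simps inner_commute power2_eq_square)
qed

lemma norm_shift_minus_i_sym_mat:
  "sym_mat T \<Longrightarrow> norm (\<alpha> *\<^sub>R v - (mat \<i> ** cmat T) *v v) = norm (\<alpha> *\<^sub>R v + (mat \<i> ** cmat T) *v v)"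
  using norm_squared_shift_i_sym_mat[of T \<alpha> v] by (metis norm_ge_zero power2_eq_iff_nonneg)

lemma norm_shift_plus_i_sym_mat_ge:
  assumes "sym_mat T"
  shows "\<bar>\<alpha>\<bar> * norm v \<le> norm (\<alpha> *\<^sub>R v + (mat \<i> ** cmat T) *v v)"
proof (rule power2_le_imp_le)
  show "(\<bar>\<alpha>\<bar> * norm v) ^ 2 \<le> norm (\<alpha> *\<^sub>R v + (mat \<i> ** cmat T) *v v) ^ 2"
    using norm_squared_shift_i_sym_mat(2)[OF assms] by (simp add: power_mult_distrib)
qed simp

lemma pos_def_mat_coercive:
  fixes W :: "real^'n^'n"
  assumes "pos_def_mat W"
  obtains \<mu> where "\<mu> > 0" "\<And>a. \<mu> * norm a ^ 2 \<le> a \<bullet> (W *v a)"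
proof -
  have "sphere (0::real^'n) 1 \<noteq> {}"
    by (metis empty_iff mem_sphere_0 norm_axis_1)
  moreover have "continuous_on (sphere 0 1) (\<lambda>a::real^'n. a \<bullet> (W *v a))"
    by (intro continuous_intros linear_continuous_on matrix_vector_mul_bounded_linear)
  ultimately obtain a\<^sub>0 where a\<^sub>0: "a\<^sub>0 \<in> sphere 0 1"
    and min: "\<And>u. u \<in> sphere 0 1 \<Longrightarrow> a\<^sub>0 \<bullet> (W *v a\<^sub>0) \<le> u \<bullet> (W *v u)"
    using continuous_attains_inf[OF compact_sphere] by blast
  have "a\<^sub>0 \<noteq> 0"
    using a\<^sub>0 by auto
  then have "a\<^sub>0 \<bullet> (W *v a\<^sub>0) > 0"
    using assms unfolding pos_def_mat_def by blast
  moreover have "a\<^sub>0 \<bullet> (W *v a\<^sub>0) * norm a ^ 2 \<le> a \<bullet> (W *v a)" for a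
  proof (cases "a = 0")
    case False
    define u where "u = (1 / norm a) *\<^sub>R a"
    have "u \<in> sphere 0 1" "a = norm a *\<^sub>R u"
      using False by (simp_all add: u_def)
    then have "a \<bullet> (W *v a) = norm a ^ 2 * (u \<bullet> (W *v u))"
      by (metis inner_scaleR_left inner_scaleR_right matrix_vector_mult_scaleR mult.assoc
          power2_eq_square)
    with min[OF \<open>u \<in> sphere 0 1\<close>] show ?thesis
      by (metis mult.commute mult_right_mono zero_le_power2)
  qed simp
  ultimately show ?thesis using that by blast
qed

lemma pos_def_mat_norm_shift_contraction_squared:
  fixes W :: "real^'n^'n"
  assumes "pos_def_mat W" "\<alpha> > 0"
  obtains \<kappa> where "\<kappa> < 1" "\<And>a. norm (\<alpha> *\<^sub>R a - W *v a) ^ 2 \<le> \<kappa> * norm (\<alpha> *\<^sub>R a + W *v a) ^ 2"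
proof -
  obtain \<mu> where "\<mu> > 0" and \<mu>: "\<And>a. \<mu> * norm a ^ 2 \<le> a \<bullet> (W *v a)"
    using pos_def_mat_coercive[OF assms(1)] by blast
  obtain K where "K > 0" and K: "\<And>a. norm (W *v a) \<le> norm a * K"
    using bounded_linear.pos_bounded[OF matrix_vector_mul_bounded_linear[of W]] by blast
  define c where "c = 4 * \<alpha> * \<mu> / (\<alpha> + K) ^ 2"
  have "c > 0"
    using assms(2) \<open>\<mu> > 0\<close> \<open>K > 0\<close> by (simp add: c_def)
  have "norm (\<alpha> *\<^sub>R a - W *v a) ^ 2 \<le> (1 - c) * norm (\<alpha> *\<^sub>R a + W *v a) ^ 2" for a
  proof -
    have "norm (\<alpha> *\<^sub>R a + W *v a) \<le> (\<alpha> + K) * norm a"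
      using norm_triangle_ineq[of "\<alpha> *\<^sub>R a" "W *v a"] K[of a] assms(2) by (simp add: algebra_simps)
    then have "c * norm (\<alpha> *\<^sub>R a + W *v a) ^ 2 \<le> c * ((\<alpha> + K) * norm a) ^ 2"
      using \<open>c > 0\<close> by (simp add: power_mono)
    also have "\<dots> = 4 * \<alpha> * (\<mu> * norm a ^ 2)"
      using assms(2) \<open>K > 0\<close> by (simp add: c_def power_mult_distrib)
    also have "\<dots> \<le> 4 * \<alpha> * (a \<bullet> (W *v a))"
      using \<mu>[of a] assms(2) by simp
    also have "\<dots> = norm (\<alpha> *\<^sub>R a + W *v a) ^ 2 - norm (\<alpha> *\<^sub>R a - W *v a) ^ 2"
      unfolding power2_norm_eq_inner by (simp add: inner_simps inner_commute algebra_simps)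
    finally show ?thesis by (simp add: algebra_simps)
  qed
  with \<open>c > 0\<close> show ?thesis using that[of "1 - c"] by simp
qed

lemma pos_def_mat_cmat_norm_shift_contraction:
  fixes W :: "real^'n^'n"
  assumes "pos_def_mat W" "\<alpha> > 0"
  obtains \<rho> where "\<rho> < 1" "\<And>u. norm (\<alpha> *\<^sub>R u - cmat W *v u) \<le> \<rho> * norm (\<alpha> *\<^sub>R u + cmat W *v u)"
proof -
  obtain \<kappa> where "\<kappa> < 1" and \<kappa>: "\<And>a. norm (\<alpha> *\<^sub>R a - W *v a) ^ 2 \<le> \<kappa> * norm (\<alpha> *\<^sub>R a + W *v a) ^ 2"
    using pos_def_mat_norm_shift_contraction_squared[OF assms] by blast
  have "norm (\<alpha> *\<^sub>R u - cmat W *v u) \<le> sqrt \<kappa> * norm (\<alpha> *\<^sub>R u + cmat W *v u)" for u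
  proof -
    have "norm (\<alpha> *\<^sub>R u - cmat W *v u) ^ 2 \<le> \<kappa> * norm (\<alpha> *\<^sub>R u + cmat W *v u) ^ 2"
      unfolding norm_squared_vec_Re_Im[of "_ - _"] norm_squared_vec_Re_Im[of "_ + _"]
      using add_mono[OF \<kappa> \<kappa>] by (simp add: distrib_left)
    then have "sqrt (norm (\<alpha> *\<^sub>R u - cmat W *v u) ^ 2)
        \<le> sqrt (\<kappa> * norm (\<alpha> *\<^sub>R u + cmat W *v u) ^ 2)"
      by (rule real_sqrt_le_mono)
    then show ?thesis by (simp add: real_sqrt_mult)
  qed
  with \<open>\<kappa> < 1\<close> show ?thesis using that[of "sqrt \<kappa>"] by simp
qed

lemma gadi_half_step_error:
  fixes W P :: "'a::real_vector \<Rightarrow> 'a"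
  assumes "linear W" "linear P"
    and half: "\<alpha> *\<^sub>R y + W y = \<alpha> *\<^sub>R x - P x + b"
    and sol: "W s + P s = b"
  shows "\<alpha> *\<^sub>R (y - s) + W (y - s) = \<alpha> *\<^sub>R (x - s) - P (x - s)"
  using half sol by (simp add: linear_diff[OF assms(1)] linear_diff[OF assms(2)] algebra_simps)

lemma gadi_full_step_error:
  fixes W P :: "'a::real_vector \<Rightarrow> 'a"
  assumes "linear P"
    and half_err: "\<alpha> *\<^sub>R (y - s) + W (y - s) = \<alpha> *\<^sub>R (x - s) - P (x - s)"
    and full: "\<alpha> *\<^sub>R x' + P x' = P x - ((1 - \<omega>) * \<alpha>) *\<^sub>R x + ((2 - \<omega>) * \<alpha>) *\<^sub>R y"
  shows "\<alpha> *\<^sub>R (x' - s) + P (x' - s)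
       = (\<omega> / 2) *\<^sub>R (\<alpha> *\<^sub>R (x - s) + P (x - s)) + (1 - \<omega> / 2) *\<^sub>R (\<alpha> *\<^sub>R (y - s) - W (y - s))"
proof -
  define e f where "e = x - s" and "f = y - s"
  have W_err: "W f = \<alpha> *\<^sub>R e - P e - \<alpha> *\<^sub>R f"
    using half_err unfolding e_def[symmetric] f_def[symmetric] by (simp add: algebra_simps)
  \<comment> \<open>the simplifier does not collect like terms \<open>a *\<^sub>R v + b *\<^sub>R v\<close>, so coefficients are matched by hand\<close>
  have "((2 - \<omega>) * \<alpha>) *\<^sub>R s = ((1 - \<omega>) * \<alpha>) *\<^sub>R s + \<alpha> *\<^sub>R s"
    by (simp flip: scaleR_add_left) (simp add: algebra_simps)
  then have "\<alpha> *\<^sub>R (x' - s) + P (x' - s) = P e - ((1 - \<omega>) * \<alpha>) *\<^sub>R e + ((2 - \<omega>) * \<alpha>) *\<^sub>R f"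
    using full by (simp add: e_def f_def linear_diff[OF assms(1)] algebra_simps)
  also have "\<dots> = ((\<omega> / 2) * \<alpha> - (1 - \<omega> / 2) * \<alpha>) *\<^sub>R e + ((\<omega> / 2) + (1 - \<omega> / 2)) *\<^sub>R P e
                  + ((1 - \<omega> / 2) * (2 * \<alpha>)) *\<^sub>R f"
    by (simp add: algebra_simps)
  also have "\<dots> = (\<omega> / 2) *\<^sub>R (\<alpha> *\<^sub>R e + P e) + (1 - \<omega> / 2) *\<^sub>R ((2 * \<alpha>) *\<^sub>R f - \<alpha> *\<^sub>R e + P e)"
    by (simp only: scaleR_add_right scaleR_diff_right scaleR_add_left scaleR_diff_left
        scaleR_scaleR)
      (simp add: algebra_simps)
  also have "(2 * \<alpha>) *\<^sub>R f - \<alpha> *\<^sub>R e + P e = \<alpha> *\<^sub>R f - W f"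
    unfolding W_err by (simp add: algebra_simps flip: scaleR_2)
  finally show ?thesis unfolding e_def f_def .
qed

lemma gadi_converges:
  fixes W P :: "'a::banach \<Rightarrow> 'a" and x y :: "nat \<Rightarrow> 'a"
  assumes "linear W" "linear P" "\<alpha> > 0" "0 \<le> \<omega>" "\<omega> < 2" "\<rho> < 1"
    and W_contraction: "\<And>u. norm (\<alpha> *\<^sub>R u - W u) \<le> \<rho> * norm (\<alpha> *\<^sub>R u + W u)"
    and P_norm_eq: "\<And>u. norm (\<alpha> *\<^sub>R u - P u) = norm (\<alpha> *\<^sub>R u + P u)"
    and P_norm_ge: "\<And>u. \<alpha> * norm u \<le> norm (\<alpha> *\<^sub>R u + P u)"
    and sol: "W s + P s = b"
    and half: "\<And>k. \<alpha> *\<^sub>R y k + W (y k) = \<alpha> *\<^sub>R x k - P (x k) + b"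
    and full: "\<And>k. \<alpha> *\<^sub>R x (Suc k) + P (x (Suc k))
                    = P (x k) - ((1 - \<omega>) * \<alpha>) *\<^sub>R x k + ((2 - \<omega>) * \<alpha>) *\<^sub>R y k"
  shows "x \<longlonglongrightarrow> s"
proof -
  define g where "g k = \<alpha> *\<^sub>R (x k - s) + P (x k - s)" for k
  define c where "c = \<omega> / 2 + (1 - \<omega> / 2) * \<rho>"
  have "(1 - \<omega> / 2) * \<rho> < 1 - \<omega> / 2"
    using assms(5,6) by simp
  then have "c < 1"
    by (simp add: c_def)
  have contraction: "norm (g (Suc k)) \<le> c * norm (g k)" for k
  proof -
    define h where "h = \<alpha> *\<^sub>R (y k - s) - W (y k - s)"
    have half_err: "\<alpha> *\<^sub>R (y k - s) + W (y k - s) = \<alpha> *\<^sub>R (x k - s) - P (x k - s)"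
      using gadi_half_step_error[OF assms(1,2) half sol] .
    have "norm h \<le> \<rho> * norm (g k)"
      using W_contraction[of "y k - s"] unfolding h_def half_err P_norm_eq g_def .
    have "g (Suc k) = (\<omega> / 2) *\<^sub>R g k + (1 - \<omega> / 2) *\<^sub>R h"
      unfolding g_def h_def by (rule gadi_full_step_error[where W = W, OF assms(2) half_err full])
    then have "norm (g (Suc k)) \<le> (\<omega> / 2) * norm (g k) + (1 - \<omega> / 2) * norm h"
      using norm_triangle_ineq[of "(\<omega> / 2) *\<^sub>R g k" "(1 - \<omega> / 2) *\<^sub>R h"] assms(4,5) by simp
    also have "\<dots> \<le> (\<omega> / 2) * norm (g k) + (1 - \<omega> / 2) * (\<rho> * norm (g k))"
      using \<open>norm h \<le> \<rho> * norm (g k)\<close> assms(5) by simp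
    finally show ?thesis by (simp add: c_def algebra_simps)
  qed
  have "g \<longlonglongrightarrow> 0"
    using summable_ratio_test[where f = g and N = 0, OF \<open>c < 1\<close> contraction]
    by (rule summable_LIMSEQ_zero)
  then have "(\<lambda>k. norm (g k) / \<alpha>) \<longlonglongrightarrow> 0"
    by (intro tendsto_divide_zero tendsto_norm_zero)
  moreover have "\<forall>\<^sub>F k in sequentially. norm (x k - s) \<le> norm (g k) / \<alpha>"
    using P_norm_ge assms(3) unfolding g_def
    by (intro always_eventually allI) (simp add: pos_le_divide_eq mult.commute)
  ultimately have "(\<lambda>k. x k - s) \<longlonglongrightarrow> 0"
    by (intro Lim_null_comparison[of "\<lambda>k. x k - s" "\<lambda>k. norm (g k) / \<alpha>"])
  then show ?thesis
    by (simp add: LIM_zero_iff)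
qed

theorem theorem2:
  fixes W T :: "real^'n^'n" and b :: "complex^'n"
    and \<alpha> \<omega> :: real
    and x y :: "nat \<Rightarrow> complex^'n"
  assumes "pos_def_mat W"
    and "pos_semidef_mat T"
    and "invertible (cmat W + mat \<i> ** cmat T)"
    and "\<alpha> > 0" and "0 \<le> \<omega>" and "\<omega> < 2"
    and half_step: "\<And>k. (mat (complex_of_real \<alpha>) + cmat W) *v y k
                       = (mat (complex_of_real \<alpha>) - mat \<i> ** cmat T) *v x k + b"
    and full_step: "\<And>k. (mat (complex_of_real \<alpha>) + mat \<i> ** cmat T) *v x (Suc k)
                       = (mat \<i> ** cmat T - mat (complex_of_real ((1 - \<omega>) * \<alpha>))) *v x k
                         + complex_of_real ((2 - \<omega>) * \<alpha>) *s y k"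
  shows "\<exists>s. (cmat W + mat \<i> ** cmat T) *v s = b
              \<and> (\<forall>s'. (cmat W + mat \<i> ** cmat T) *v s' = b \<longrightarrow> s' = s)
              \<and> x \<longlonglongrightarrow> s"
proof -
  obtain s where sol: "(cmat W + mat \<i> ** cmat T) *v s = b"
    and unique: "\<forall>s'. (cmat W + mat \<i> ** cmat T) *v s' = b \<longrightarrow> s' = s"
    using invertible_matrix_vector_eq_unique[OF assms(3)] by blast
  have "sym_mat T"
    using assms(2) unfolding pos_semidef_mat_def by blast
  obtain \<rho> where "\<rho> < 1"
    and W_contraction: "\<And>u. norm (\<alpha> *\<^sub>R u - cmat W *v u) \<le> \<rho> * norm (\<alpha> *\<^sub>R u + cmat W *v u)"
    using pos_def_mat_cmat_norm_shift_contraction[OF assms(1,4)] by blast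
  have P_norm_ge: "\<alpha> * norm u \<le> norm (\<alpha> *\<^sub>R u + (mat \<i> ** cmat T) *v u)" for u
    using norm_shift_plus_i_sym_mat_ge[OF \<open>sym_mat T\<close>, of \<alpha> u] assms(4) by simp
  have half: "\<alpha> *\<^sub>R y k + cmat W *v y k = \<alpha> *\<^sub>R x k - (mat \<i> ** cmat T) *v x k + b" for k
    using half_step[of k]
    by (simp add: matrix_vector_mult_add_rdistrib matrix_vector_mult_diff_rdistrib
        mat_matrix_vector_mult of_real_vector_scalar_mult)
  have full: "\<alpha> *\<^sub>R x (Suc k) + (mat \<i> ** cmat T) *v x (Suc k)
      = (mat \<i> ** cmat T) *v x k - ((1 - \<omega>) * \<alpha>) *\<^sub>R x k + ((2 - \<omega>) * \<alpha>) *\<^sub>R y k" for k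
    using full_step[of k]
    by (simp add: matrix_vector_mult_add_rdistrib matrix_vector_mult_diff_rdistrib
        mat_matrix_vector_mult of_real_vector_scalar_mult del: of_real_mult of_real_diff)
  have "x \<longlonglongrightarrow> s"
    by (rule gadi_converges[where W = "(*v) (cmat W)" and P = "(*v) (mat \<i> ** cmat T)"
          and x = x and y = y, OF matrix_vector_mul_linear matrix_vector_mul_linear assms(4-6)
          \<open>\<rho> < 1\<close> W_contraction norm_shift_minus_i_sym_mat[OF \<open>sym_mat T\<close>] P_norm_ge
          sol[unfolded matrix_vector_mult_add_rdistrib] half full])
  with sol unique show ?thesis
    by blast
qed

end
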